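(* Fix a risk level $\beta>0$ and a transient MDP with a sink state as described in the context (in particular $\mu>0$ componentwise). Suppose that $\bm{w}^{\infty,\star}>-\bm{\infty}$, i.e. every component of $\bm{w}^{\infty,\star}$ is finite. Then there exists a stationary deterministic policy $\pi^\star=(\bm d^\star)_\infty\in\Pi_{\mathrm{SD}}$ such that \[ \bm{w}^{\infty,\star}=\bm{w}^{\infty}(\pi^\star)=L^{\bm d^\star}\bm{w}^{\infty,\star}, \] and $\bm{w}^{\infty,\star}$ is the unique vector satisfying this equation.
   Context: MDP: states $\bar{\mathcal S}=\{1,\dots,S,S+1\}$, with $e:=S+1$ a sink state and $\mathcal S=\{1,\dots,S\}$ the non-sink states; finite actions $\mathcal A=\{1,\dots,A\}$; transition probabilities $\bar p(s,a,s')$; real rewards $\bar r(s,a,s')$ of arbitrary sign (written $p,r$ below); $\bar p(e,a,e)=1$, $\bar r(e,a,e)=0$ for all $a$; initial distribution $\bar\mu$ with $\bar\mu_e=0$ and its restriction $\mu$ to $\mathcal S$ satisfies $\mu>0$. Policies: $\Pi_{\mathrm{HR}}$ history-dependent randomized; $\Pi_{\mathrm{MR}}$ / $\Pi_{\mathrm{MD}}$ Markov randomized / deterministic (sequences of decision rules $\bm d_k:\mathcal S\to\Delta(\mathcal A)$); $\Pi_{\mathrm{SR}}$ / $\Pi_{\mathrm{SD}}$ stationary randomized / deterministic, $\pi=(\bm d)_\infty=(\bm d,\bm d,\dots)$; $\mathcal D=(\Delta(\mathcal A))^{\mathcal S}$ the set of decision rules, $d_a(s)$ the probability of $a$ in $s$.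 Transience (standing assumption): for every $\pi\in\Pi_{\mathrm{SD}}$, $\sum_{t=0}^\infty \mathbb P^{\pi,s}[\tilde s_t=s']<\infty$ for all $s,s'\in\mathcal S$. Entropic risk measure: $\mathrm{ERM}_\beta[\tilde x]=-\beta^{-1}\log\mathbb E[e^{-\beta\tilde x}]$. For $t\in\mathbb N$, $\pi\in\Pi_{\mathrm{MD}}$, $s\in\mathcal S$: $v^t_s(\pi)=\mathrm{ERM}^{\pi,s}_\beta[\sum_{k=0}^{t-1}r(\tilde s_k,\tilde a_k,\tilde s_{k+1})]$ (process started at $s$ following $\pi$), $v^{t,\star}_s=\max_{\pi\in\Pi_{\mathrm{MD}}}v^t_s(\pi)$; exponential value functions $w^t_s(\pi)=-\exp(-\beta v^t_s(\pi))$, $w^{t,\star}_s=-\exp(-\beta v^{t,\star}_s)$; $\bm w^\infty(\pi)=\liminf_{t\to\infty}\bm w^t(\pi)$, $\bm w^{\infty,\star}=\liminf_{t\to\infty}\bm w^{t,\star}$ (componentwise). For $\bm d\in\mathcal D$ define $\bm B^{\bm d}\in\mathbb R_+^{S\times S}$, $\bm b^{\bm d}\in\mathbb R_+^S$ by $B^{\bm d}_{s,s'}=\sum_a p(s,a,s')d_a(s)e^{-\beta r(s,a,s')}$, $b^{\bm d}_s=\sum_a p(s,a,e)d_a(s)e^{-\beta r(s,a,e)}$ for $s,s'\in\mathcal S$. Exponential Bellman operators on $\mathbb R^S$: $L^{\bm d}\bm w=\bm B^{\bm d}\bm w-\bm b^{\bm d}$ and $L^\star\bm w=\max_{\bm d\in\mathcal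 D}L^{\bm d}\bm w$ (componentwise max). *)

theory Defs
  imports "HOL-Analysis.Analysis"
begin

(* Conventions: non-sink states are 1..S, the sink is e = S+1 (= Suc S),
   actions are 1..A.  p s a s' and r s a s' are transition probabilities and
   rewards.  Vectors in R^S are functions nat => real read on {1..S}. *)

definition states :: "nat \<Rightarrow> nat set" where
  "states S = {1..Suc S}"

definition paths :: "nat \<Rightarrow> nat \<Rightarrow> nat \<Rightarrow> (nat \<Rightarrow> nat) set" where
  "paths S s t = PiE {0..t} (\<lambda>k. if k = 0 then {s} else states S)"

(* Markov deterministic policies: pi k s is the action taken at time k in state s *)
definition MD_policies :: "nat \<Rightarrow> (nat \<Rightarrow> nat \<Rightarrow> nat) set" where
  "MD_policies A = {\<pi>. \<forall>k s. \<pi> k s \<in> {1..A}}"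

definition SD_rules :: "nat \<Rightarrow> (nat \<Rightarrow> nat) set" where
  "SD_rules A = {d. \<forall>s. d s \<in> {1..A}}"

definition stationary :: "(nat \<Rightarrow> nat) \<Rightarrow> (nat \<Rightarrow> nat \<Rightarrow> nat)" where
  "stationary d = (\<lambda>k. d)"

definition path_prob :: "(nat \<Rightarrow> nat \<Rightarrow> nat \<Rightarrow> real) \<Rightarrow> (nat \<Rightarrow> nat \<Rightarrow> nat) \<Rightarrow> nat \<Rightarrow> (nat \<Rightarrow> nat) \<Rightarrow> real" where
  "path_prob p \<pi> t \<omega> = (\<Prod>k<t. p (\<omega> k) (\<pi> k (\<omega> k)) (\<omega> (Suc k)))"

definition path_ret :: "(nat \<Rightarrow> nat \<Rightarrow> nat \<Rightarrow> real) \<Rightarrow> (nat \<Rightarrow> nat \<Rightarrow> nat) \<Rightarrow> nat \<Rightarrow> (nat \<Rightarrow> nat) \<Rightarrow> real" where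
  "path_ret r \<pi> t \<omega> = (\<Sum>k<t. r (\<omega> k) (\<pi> k (\<omega> k)) (\<omega> (Suc k)))"

definition state_prob :: "nat \<Rightarrow> (nat \<Rightarrow> nat \<Rightarrow> nat \<Rightarrow> real) \<Rightarrow> (nat \<Rightarrow> nat \<Rightarrow> nat) \<Rightarrow> nat \<Rightarrow> nat \<Rightarrow> nat \<Rightarrow> real" where
  "state_prob S p \<pi> s t s' = (\<Sum>\<omega>\<in>{\<omega>\<in>paths S s t. \<omega> t = s'}. path_prob p \<pi> t \<omega>)"

definition ERM :: "real \<Rightarrow> 'a set \<Rightarrow> ('a \<Rightarrow> real) \<Rightarrow> ('a \<Rightarrow> real) \<Rightarrow> real" where
  "ERM \<beta> \<Omega> P X = - (1 / \<beta>) * ln (\<Sum>\<omega>\<in>\<Omega>. P \<omega> * exp (- \<beta> * X \<omega>))"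

definition mdp :: "nat \<Rightarrow> nat \<Rightarrow> (nat \<Rightarrow> nat \<Rightarrow> nat \<Rightarrow> real) \<Rightarrow> (nat \<Rightarrow> nat \<Rightarrow> nat \<Rightarrow> real) \<Rightarrow> (nat \<Rightarrow> real) \<Rightarrow> bool" where
  "mdp S A p r \<mu> \<longleftrightarrow>
     1 \<le> A \<and>
     (\<forall>s\<in>states S. \<forall>a\<in>{1..A}. (\<forall>s'\<in>states S. 0 \<le> p s a s') \<and> (\<Sum>s'\<in>states S. p s a s') = 1) \<and>
     (\<forall>a\<in>{1..A}. p (Suc S) a (Suc S) = 1 \<and> r (Suc S) a (Suc S) = 0) \<and>
     (\<forall>s\<in>states S. 0 \<le> \<mu> s) \<and> (\<Sum>s\<in>states S. \<mu> s) = 1 \<and>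
     \<mu> (Suc S) = 0 \<and> (\<forall>s\<in>{1..S}. 0 < \<mu> s)"

definition transient :: "nat \<Rightarrow> nat \<Rightarrow> (nat \<Rightarrow> nat \<Rightarrow> nat \<Rightarrow> real) \<Rightarrow> bool" where
  "transient S A p \<longleftrightarrow>
     (\<forall>d\<in>SD_rules A. \<forall>s\<in>{1..S}. \<forall>s'\<in>{1..S}.
        summable (\<lambda>t. state_prob S p (stationary d) s t s'))"

definition v_fin :: "nat \<Rightarrow> (nat \<Rightarrow> nat \<Rightarrow> nat \<Rightarrow> real) \<Rightarrow> (nat \<Rightarrow> nat \<Rightarrow> nat \<Rightarrow> real) \<Rightarrow> real \<Rightarrow> (nat \<Rightarrow> nat \<Rightarrow> nat) \<Rightarrow> nat \<Rightarrow> nat \<Rightarrow> real" where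
  "v_fin S p r \<beta> \<pi> t s = ERM \<beta> (paths S s t) (path_prob p \<pi> t) (path_ret r \<pi> t)"

definition v_opt :: "nat \<Rightarrow> nat \<Rightarrow> (nat \<Rightarrow> nat \<Rightarrow> nat \<Rightarrow> real) \<Rightarrow> (nat \<Rightarrow> nat \<Rightarrow> nat \<Rightarrow> real) \<Rightarrow> real \<Rightarrow> nat \<Rightarrow> nat \<Rightarrow> real" where
  "v_opt S A p r \<beta> t s = (SUP \<pi>\<in>MD_policies A. v_fin S p r \<beta> \<pi> t s)"

definition w_fin :: "nat \<Rightarrow> (nat \<Rightarrow> nat \<Rightarrow> nat \<Rightarrow> real) \<Rightarrow> (nat \<Rightarrow> nat \<Rightarrow> nat \<Rightarrow> real) \<Rightarrow> real \<Rightarrow> (nat \<Rightarrow> nat \<Rightarrow> nat) \<Rightarrow> nat \<Rightarrow> nat \<Rightarrow> real" where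
  "w_fin S p r \<beta> \<pi> t s = - exp (- \<beta> * v_fin S p r \<beta> \<pi> t s)"

definition w_opt :: "nat \<Rightarrow> nat \<Rightarrow> (nat \<Rightarrow> nat \<Rightarrow> nat \<Rightarrow> real) \<Rightarrow> (nat \<Rightarrow> nat \<Rightarrow> nat \<Rightarrow> real) \<Rightarrow> real \<Rightarrow> nat \<Rightarrow> nat \<Rightarrow> real" where
  "w_opt S A p r \<beta> t s = - exp (- \<beta> * v_opt S A p r \<beta> t s)"

definition w_inf :: "nat \<Rightarrow> (nat \<Rightarrow> nat \<Rightarrow> nat \<Rightarrow> real) \<Rightarrow> (nat \<Rightarrow> nat \<Rightarrow> nat \<Rightarrow> real) \<Rightarrow> real \<Rightarrow> (nat \<Rightarrow> nat \<Rightarrow> nat) \<Rightarrow> nat \<Rightarrow> ereal" where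
  "w_inf S p r \<beta> \<pi> s = liminf (\<lambda>t. ereal (w_fin S p r \<beta> \<pi> t s))"

definition w_inf_opt :: "nat \<Rightarrow> nat \<Rightarrow> (nat \<Rightarrow> nat \<Rightarrow> nat \<Rightarrow> real) \<Rightarrow> (nat \<Rightarrow> nat \<Rightarrow> nat \<Rightarrow> real) \<Rightarrow> real \<Rightarrow> nat \<Rightarrow> ereal" where
  "w_inf_opt S A p r \<beta> s = liminf (\<lambda>t. ereal (w_opt S A p r \<beta> t s))"

(* randomized decision rule d s a = probability of action a in state s;
   the deterministic rule d corresponds to det_rule d *)
definition det_rule :: "(nat \<Rightarrow> nat) \<Rightarrow> nat \<Rightarrow> nat \<Rightarrow> real" where
  "det_rule d = (\<lambda>s a. if a = d s then 1 else 0)"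

definition Bmat :: "nat \<Rightarrow> nat \<Rightarrow> (nat \<Rightarrow> nat \<Rightarrow> nat \<Rightarrow> real) \<Rightarrow> (nat \<Rightarrow> nat \<Rightarrow> nat \<Rightarrow> real) \<Rightarrow> real \<Rightarrow> (nat \<Rightarrow> nat \<Rightarrow> real) \<Rightarrow> nat \<Rightarrow> nat \<Rightarrow> real" where
  "Bmat S A p r \<beta> dr s s' = (\<Sum>a\<in>{1..A}. p s a s' * dr s a * exp (- \<beta> * r s a s'))"

definition bvec :: "nat \<Rightarrow> nat \<Rightarrow> (nat \<Rightarrow> nat \<Rightarrow> nat \<Rightarrow> real) \<Rightarrow> (nat \<Rightarrow> nat \<Rightarrow> nat \<Rightarrow> real) \<Rightarrow> real \<Rightarrow> (nat \<Rightarrow> nat \<Rightarrow> real) \<Rightarrow> nat \<Rightarrow> real" where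
  "bvec S A p r \<beta> dr s = (\<Sum>a\<in>{1..A}. p s a (Suc S) * dr s a * exp (- \<beta> * r s a (Suc S)))"

definition L_op :: "nat \<Rightarrow> nat \<Rightarrow> (nat \<Rightarrow> nat \<Rightarrow> nat \<Rightarrow> real) \<Rightarrow> (nat \<Rightarrow> nat \<Rightarrow> nat \<Rightarrow> real) \<Rightarrow> real \<Rightarrow> (nat \<Rightarrow> nat \<Rightarrow> real) \<Rightarrow> (nat \<Rightarrow> real) \<Rightarrow> nat \<Rightarrow> real" where
  "L_op S A p r \<beta> dr w s = (\<Sum>s'\<in>{1..S}. Bmat S A p r \<beta> dr s s' * w s') - bvec S A p r \<beta> dr s"

end

theory Submission
  imports Defs
begin

text \<open>Write \<open>U\<^sub>t = - w\<^sup>t\<^sup>,\<^sup>\<star>\<close>. Then \<open>U\<^sub>0 = 1\<close> and \<open>U\<^sub>t\<^sub>+\<^sub>1 = min\<^sub>a Q\<^sub>a U\<^sub>t\<close>, where each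
  \<open>Q\<^sub>a z = B\<^sup>a z + b\<^sup>a\<close> is an affine map with nonnegative coefficients. If \<open>w\<^sup>\<infinity>\<^sup>,\<^sup>\<star>\<close> is finite,
  \<open>U\<^sup>+ = limsup U\<^sub>t\<close> and \<open>U\<^sup>- = liminf U\<^sub>t\<close> are finite, and passing to the limit in the recursion
  gives \<open>U\<^sup>+ \<le> Q\<^sub>a U\<^sup>+\<close> for every action and \<open>min\<^sub>a Q\<^sub>a U\<^sup>- \<le> U\<^sup>-\<close>. For a rule \<open>d\<close> that is greedy
  for \<open>U\<^sup>-\<close>, the vector \<open>U\<^sup>-\<close> is a nonnegative supersolution and \<open>U\<^sup>+\<close> a subsolution of
  \<open>z = T z\<close> with \<open>T z = B\<^sup>d z + b\<^sup>d\<close>. Transience means that from every state some weight leaks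
  into the sink, so relative to the supersolution the powers \<open>(B\<^sup>d)\<^sup>n\<close> contract to zero. Hence
  \<open>U\<^sup>+ - U\<^sup>- \<le> (B\<^sup>d)\<^sup>n (U\<^sup>+ - U\<^sup>-) \<longrightarrow> 0\<close>, so \<open>U\<^sup>+ = U\<^sup>-\<close> is a fixed point of \<open>T\<close> that attracts
  every orbit; in particular it attracts \<open>T\<^sup>t 1 = - w\<^sup>t((d)\<^sub>\<infinity>)\<close>, and it is the only fixed point.\<close>

section \<open>Nonnegative affine maps\<close>

locale nonneg_affine =
  fixes I :: "'a set" and B :: "'a \<Rightarrow> 'a \<Rightarrow> real" and b :: "'a \<Rightarrow> real"
  assumes finite_I: "finite I"
    and B_nonneg: "\<And>s s'. s \<in> I \<Longrightarrow> s' \<in> I \<Longrightarrow> 0 \<le> B s s'"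
    and b_nonneg: "\<And>s. s \<in> I \<Longrightarrow> 0 \<le> b s"
begin

definition lin :: "('a \<Rightarrow> real) \<Rightarrow> 'a \<Rightarrow> real" where
  "lin z s = (\<Sum>s'\<in>I. B s s' * z s')"

definition aff :: "('a \<Rightarrow> real) \<Rightarrow> 'a \<Rightarrow> real" where
  "aff z s = lin z s + b s"

lemma lin_mono: "(\<And>s. s \<in> I \<Longrightarrow> z s \<le> z' s) \<Longrightarrow> s \<in> I \<Longrightarrow> lin z s \<le> lin z' s"
  unfolding lin_def by (intro sum_mono mult_left_mono) (auto intro: B_nonneg)

lemma lin_pow_mono:
  "(\<And>s. s \<in> I \<Longrightarrow> z s \<le> z' s) \<Longrightarrow> s \<in> I \<Longrightarrow> (lin ^^ n) z s \<le> (lin ^^ n) z' s"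
  by (induction n arbitrary: s) (simp_all add: lin_mono)

lemma lin_pow_scale: "(lin ^^ n) (\<lambda>s. c * z s) = (\<lambda>s. c * (lin ^^ n) z s)"
  by (induction n) (simp_all add: lin_def sum_distrib_left mult_ac)

lemma lin_pow_nonneg: "(\<And>s. s \<in> I \<Longrightarrow> 0 \<le> z s) \<Longrightarrow> s \<in> I \<Longrightarrow> 0 \<le> (lin ^^ n) z s"
  using lin_pow_mono[of "\<lambda>s. 0" z s n] lin_pow_scale[of n 0 z] by simp

lemma aff_mono: "(\<And>s. s \<in> I \<Longrightarrow> z s \<le> z' s) \<Longrightarrow> s \<in> I \<Longrightarrow> aff z s \<le> aff z' s"
  unfolding aff_def using lin_mono by simp

lemma aff_cong: "(\<And>s. s \<in> I \<Longrightarrow> z s = z' s) \<Longrightarrow> aff z s = aff z' s"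
  unfolding aff_def lin_def by simp

lemma aff_pow_mono:
  "(\<And>s. s \<in> I \<Longrightarrow> z s \<le> z' s) \<Longrightarrow> s \<in> I \<Longrightarrow> (aff ^^ n) z s \<le> (aff ^^ n) z' s"
  by (induction n arbitrary: s) (simp_all add: aff_mono)

lemma aff_pow_diff: "(aff ^^ n) z s - (aff ^^ n) z' s = (lin ^^ n) (\<lambda>s. z s - z' s) s"
proof (induction n arbitrary: s)
  case (Suc n)
  have "(aff ^^ Suc n) z s - (aff ^^ Suc n) z' s = lin (\<lambda>s. (aff ^^ n) z s - (aff ^^ n) z' s) s"
    by (simp add: aff_def lin_def sum_subtractf right_diff_distrib)
  also have "\<dots> = (lin ^^ Suc n) (\<lambda>s. z s - z' s) s"
    using Suc.IH by simp
  finally show ?case .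
qed simp

lemma aff_pow_sub:
  assumes "\<And>s. s \<in> I \<Longrightarrow> u s \<le> aff u s" and "s \<in> I"
  shows "u s \<le> (aff ^^ n) u s"
  using assms(2)
proof (induction n arbitrary: s)
  case (Suc n)
  have "u s \<le> aff u s" using assms(1) Suc.prems .
  also have "\<dots> \<le> aff ((aff ^^ n) u) s" using Suc by (intro aff_mono)
  finally show ?case by simp
qed simp

lemma aff_pow_super:
  assumes "\<And>s. s \<in> I \<Longrightarrow> aff v s \<le> v s" and "s \<in> I"
  shows "(aff ^^ n) v s \<le> v s"
  using assms(2)
proof (induction n arbitrary: s)
  case (Suc n)
  have "aff ((aff ^^ n) v) s \<le> aff v s" using Suc by (intro aff_mono)
  also have "\<dots> \<le> v s" using assms(1) Suc.prems .
  finally show ?case by simp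
qed simp

lemma aff_pow_fixed:
  assumes "\<And>s. s \<in> I \<Longrightarrow> aff u s = u s" and "s \<in> I"
  shows "(aff ^^ n) u s = u s"
  using aff_pow_sub[of u s n] aff_pow_super[of u s n] assms by force

lemma aff_pow_zero_nonneg: "s \<in> I \<Longrightarrow> 0 \<le> (aff ^^ n) (\<lambda>_. 0) s"
  using aff_pow_sub[of "\<lambda>_. 0"] b_nonneg by (simp add: aff_def lin_def)

lemma aff_pow_zero_mono:
  assumes "s \<in> I" and "m \<le> n"
  shows "(aff ^^ m) (\<lambda>_. 0) s \<le> (aff ^^ n) (\<lambda>_. 0) s"
proof -
  have "(aff ^^ m) (\<lambda>_. 0) s \<le> (aff ^^ m) ((aff ^^ (n - m)) (\<lambda>_. 0)) s"
    using aff_pow_zero_nonneg assms(1) by (intro aff_pow_mono)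
  also have "\<dots> = (aff ^^ n) (\<lambda>_. 0) s"
    using assms(2) funpow_add[of m "n - m" aff] by simp
  finally show ?thesis .
qed

text \<open>\<open>(aff ^^ n) (\<lambda>_. 0) = b + B b + \<dots> + B\<^sup>n\<^sup>-\<^sup>1 b\<close> is the exit weight \<open>b\<close> collected along
  paths of fewer than \<open>n\<close> steps, so states where it always vanishes never reach the exit.\<close>

lemma unreached_no_exit: "\<forall>n. (aff ^^ n) (\<lambda>_. 0) s = 0 \<Longrightarrow> b s = 0"
  by (drule spec[of _ 1]) (simp add: aff_def lin_def)

lemma unreached_closed:
  assumes s: "s \<in> I" and unreached: "\<forall>n. (aff ^^ n) (\<lambda>_. 0) s = 0"
    and s': "s' \<in> I" "B s s' \<noteq> 0"
  shows "(aff ^^ n) (\<lambda>_. 0) s' = 0"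
proof -
  have terms_nonneg: "\<forall>x\<in>I. 0 \<le> B s x * (aff ^^ n) (\<lambda>_. 0) x"
    using B_nonneg[OF s] aff_pow_zero_nonneg by simp
  have "lin ((aff ^^ n) (\<lambda>_. 0)) s + b s = 0"
    using unreached[rule_format, of "Suc n"] by (simp add: aff_def)
  moreover have "0 \<le> (\<Sum>x\<in>I. B s x * (aff ^^ n) (\<lambda>_. 0) x)"
    using terms_nonneg by (simp add: sum_nonneg)
  ultimately have "(\<Sum>x\<in>I. B s x * (aff ^^ n) (\<lambda>_. 0) x) = 0"
    using b_nonneg[OF s] unfolding lin_def by linarith
  then have "B s s' * (aff ^^ n) (\<lambda>_. 0) s' = 0"
    using sum_nonneg_eq_0_iff[OF finite_I, of "\<lambda>x. B s x * (aff ^^ n) (\<lambda>_. 0) x"]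
      terms_nonneg s'(1) by blast
  then show ?thesis using s'(2) by simp
qed

text \<open>A nonnegative supersolution \<open>v\<close> of \<open>aff\<close>, together with reachability of the exit from
  every state, makes \<open>lin\<close> contracting in the norm weighted by \<open>v\<close>; this gives a comparison
  principle and global convergence to the fixed point.\<close>

context
  fixes v :: "'a \<Rightarrow> real"
  assumes super_nonneg: "\<And>s. s \<in> I \<Longrightarrow> 0 \<le> v s"
    and super: "\<And>s. s \<in> I \<Longrightarrow> aff v s \<le> v s"
    and reachable: "\<And>s. s \<in> I \<Longrightarrow> \<exists>n. 0 < (aff ^^ n) (\<lambda>_. 0) s"
begin

lemma lin_pow_super_le: "s \<in> I \<Longrightarrow> (lin ^^ n) v s + (aff ^^ n) (\<lambda>_. 0) s \<le> v s"
  using aff_pow_diff[where n = n and z = v and z' = "\<lambda>_. 0" and s = s]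
    aff_pow_super[OF super, of s n] by simp

lemma uniformly_reachable: "\<exists>N>0. \<forall>s\<in>I. 0 < (aff ^^ N) (\<lambda>_. 0) s"
proof -
  obtain n where n: "\<And>s. s \<in> I \<Longrightarrow> 0 < (aff ^^ n s) (\<lambda>_. 0) s"
    using reachable by metis
  define N where "N = Suc (Max (n ` I))"
  have "n s \<le> N" if "s \<in> I" for s
    unfolding N_def using finite_I that by (simp add: le_SucI)
  then have "0 < (aff ^^ N) (\<lambda>_. 0) s" if "s \<in> I" for s
    using n[OF that] aff_pow_zero_mono[OF that] by (meson order_less_le_trans that)
  then show ?thesis unfolding N_def by blast
qed

lemma super_pos:
  assumes s: "s \<in> I"
  shows "0 < v s"
proof -
  obtain N where "0 < (aff ^^ N) (\<lambda>_. 0) s"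
    using uniformly_reachable s by blast
  then show ?thesis
    using lin_pow_super_le[OF s, of N] lin_pow_nonneg[where z = v, OF super_nonneg s, of N]
    by linarith
qed

lemma lin_super_le: "s \<in> I \<Longrightarrow> lin v s \<le> v s"
  using super b_nonneg unfolding aff_def by (smt (verit))

lemma lin_pow_super_antimono:
  assumes "s \<in> I" and "m \<le> n"
  shows "(lin ^^ n) v s \<le> (lin ^^ m) v s"
proof -
  have "(lin ^^ k) v s \<le> v s" if "s \<in> I" for k s
    using that
  proof (induction k arbitrary: s)
    case (Suc k)
    have "lin ((lin ^^ k) v) s \<le> lin v s" using Suc by (intro lin_mono)
    also have "\<dots> \<le> v s" using lin_super_le Suc.prems .
    finally show ?case by simp
  qed simp
  then have "(lin ^^ m) ((lin ^^ (n - m)) v) s \<le> (lin ^^ m) v s"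
    using assms(1) by (intro lin_pow_mono)
  then show ?thesis
    using assms(2) funpow_add[of m "n - m" lin] by simp
qed

text \<open>By \<open>lin_pow_super_le\<close>, after \<open>N\<close> steps a fixed fraction of \<open>v\<close> has left through \<open>b\<close>.\<close>

lemma lin_pow_super_contracts:
  obtains N \<gamma> where "0 < N" "0 \<le> \<gamma>" "\<gamma> < 1" "\<And>s. s \<in> I \<Longrightarrow> (lin ^^ N) v s \<le> \<gamma> * v s"
proof -
  obtain N where N: "0 < N" "\<And>s. s \<in> I \<Longrightarrow> 0 < (aff ^^ N) (\<lambda>_. 0) s"
    using uniformly_reachable by blast
  define \<gamma> where "\<gamma> = Max (insert 0 ((\<lambda>s. (lin ^^ N) v s / v s) ` I))"
  have "(lin ^^ N) v s / v s < 1" if "s \<in> I" for s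
    using lin_pow_super_le[OF that, of N] N(2)[OF that] super_pos[OF that] by simp
  then have "\<gamma> < 1" unfolding \<gamma>_def using finite_I by simp
  moreover have "0 \<le> \<gamma>" unfolding \<gamma>_def using finite_I by simp
  moreover have "(lin ^^ N) v s \<le> \<gamma> * v s" if "s \<in> I" for s
  proof -
    have "(lin ^^ N) v s / v s \<le> \<gamma>" unfolding \<gamma>_def using finite_I that by simp
    then show ?thesis using super_pos[OF that] by (simp add: divide_le_eq)
  qed
  ultimately show ?thesis using that[OF N(1)] by blast
qed

lemma lin_pow_super_tendsto_zero:
  assumes s: "s \<in> I"
  shows "(\<lambda>n. (lin ^^ n) v s) \<longlonglongrightarrow> 0"
proof -
  obtain N \<gamma> where N: "0 < N" and \<gamma>: "0 \<le> \<gamma>" "\<gamma> < 1"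
    and contr: "\<And>s. s \<in> I \<Longrightarrow> (lin ^^ N) v s \<le> \<gamma> * v s"
    using lin_pow_super_contracts by blast
  have geom: "(lin ^^ (m * N)) v s' \<le> \<gamma> ^ m * v s'" if "s' \<in> I" for m s'
    using that
  proof (induction m arbitrary: s')
    case (Suc m)
    have "(lin ^^ (Suc m * N)) v s' = (lin ^^ N) ((lin ^^ (m * N)) v) s'"
      by (simp add: funpow_add)
    also have "\<dots> \<le> (lin ^^ N) (\<lambda>s. \<gamma> ^ m * v s) s'"
      using Suc by (intro lin_pow_mono)
    also have "\<dots> \<le> \<gamma> ^ m * (\<gamma> * v s')"
      using contr[OF Suc.prems] \<gamma>(1) by (simp add: lin_pow_scale mult_left_mono)
    finally show ?case by (simp add: mult_ac)
  qed simp
  have upper: "(lin ^^ n) v s \<le> \<gamma> ^ (n div N) * v s" for n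
    using lin_pow_super_antimono[OF s, of "n div N * N" n] geom[OF s, of "n div N"] by simp
  have "(\<lambda>n. \<gamma> ^ n) \<longlonglongrightarrow> 0"
    using \<gamma> by (intro LIMSEQ_power_zero) simp
  then have lim: "(\<lambda>n. \<gamma> ^ (n div N) * v s) \<longlonglongrightarrow> 0"
    using filterlim_compose filterlim_at_top_div_const_nat[OF N] tendsto_mult_left_zero
    by blast
  show ?thesis
    by (rule tendsto_sandwich[OF _ _ tendsto_const lim])
       (auto intro!: always_eventually lin_pow_nonneg[where z = v, OF super_nonneg s] upper)
qed

lemma lin_pow_tendsto_zero:
  assumes s: "s \<in> I"
  shows "(\<lambda>n. (lin ^^ n) z s) \<longlonglongrightarrow> 0"
proof -
  define K where "K = Max (insert 0 ((\<lambda>s. \<bar>z s\<bar> / v s) ` I))"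
  have K: "\<bar>z s'\<bar> \<le> K * v s'" if "s' \<in> I" for s'
  proof -
    have "\<bar>z s'\<bar> / v s' \<le> K" unfolding K_def using finite_I that by simp
    then show ?thesis using super_pos[OF that] by (simp add: divide_le_eq)
  qed
  have bound: "\<forall>n. norm ((lin ^^ n) z s) \<le> K * (lin ^^ n) v s"
  proof
    fix n
    have "(lin ^^ n) z s \<le> (lin ^^ n) (\<lambda>s. K * v s) s"
      using K s by (intro lin_pow_mono) (auto simp: abs_le_iff)
    moreover have "(lin ^^ n) (\<lambda>s. - 1 * z s) s \<le> (lin ^^ n) (\<lambda>s. K * v s) s"
      using K s by (intro lin_pow_mono) (auto simp: abs_le_iff)
    ultimately show "norm ((lin ^^ n) z s) \<le> K * (lin ^^ n) v s"
      unfolding lin_pow_scale by simp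
  qed
  show ?thesis
    using Lim_null_comparison[OF always_eventually[OF bound]]
      tendsto_mult_right_zero[OF lin_pow_super_tendsto_zero[OF s]] by blast
qed

lemma sub_le_super:
  assumes sub: "\<And>s. s \<in> I \<Longrightarrow> u s \<le> aff u s" and s: "s \<in> I"
  shows "u s \<le> v s"
proof -
  have "u s - v s \<le> (lin ^^ n) (\<lambda>s. u s - v s) s" for n
    using aff_pow_sub[OF sub s, of n] aff_pow_super[OF super s, of n]
      aff_pow_diff[where z = u and z' = v and n = n and s = s]
    by linarith
  then have "u s - v s \<le> 0"
    by (intro LIMSEQ_le_const[OF lin_pow_tendsto_zero[OF s]]) auto
  then show ?thesis by simp
qed

lemma aff_pow_tendsto_fixed:
  assumes fixed: "\<And>s. s \<in> I \<Longrightarrow> aff u s = u s" and s: "s \<in> I"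
  shows "(\<lambda>n. (aff ^^ n) z s) \<longlonglongrightarrow> u s"
proof -
  have "(aff ^^ n) z s - u s = (lin ^^ n) (\<lambda>s. z s - u s) s" for n
    using aff_pow_diff[where z = z and z' = u] aff_pow_fixed[OF fixed s] by metis
  then have "(\<lambda>n. (aff ^^ n) z s - u s) \<longlonglongrightarrow> 0"
    using lin_pow_tendsto_zero[OF s, of "\<lambda>s. z s - u s"] by simp
  then show ?thesis by (simp add: LIM_zero_iff)
qed

lemma fixed_point_unique:
  assumes "\<And>s. s \<in> I \<Longrightarrow> aff u s = u s" and "\<And>s. s \<in> I \<Longrightarrow> aff z s = z s" and s: "s \<in> I"
  shows "z s = u s"
  using aff_pow_tendsto_fixed[OF assms(1) s, of z] aff_pow_fixed[OF assms(2) s]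
  by (simp add: LIMSEQ_const_iff)

end

end

section \<open>Paths and the exponential utility\<close>

lemma finite_states: "finite (states S)"
  unfolding states_def by simp

lemma nonsink_in_states: "s \<in> {1..S} \<Longrightarrow> s \<in> states S"
  unfolding states_def by auto

lemma sink_in_states: "Suc S \<in> states S"
  unfolding states_def by auto

lemma states_eq_insert_sink: "states S = insert (Suc S) {1..S}"
  and sink_notin_nonsink: "Suc S \<notin> {1..S}"
  unfolding states_def by auto

lemma MD_policies_shift: "\<pi> \<in> MD_policies A \<Longrightarrow> (\<lambda>k. \<pi> (Suc k)) \<in> MD_policies A"
  unfolding MD_policies_def by auto

lemma MD_policies_action: "\<pi> \<in> MD_policies A \<Longrightarrow> \<pi> k s \<in> {1..A}"
  unfolding MD_policies_def by auto

lemma SD_rules_action: "d \<in> SD_rules A \<Longrightarrow> d s \<in> {1..A}"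
  unfolding SD_rules_def by auto

lemma stationary_in_MD_policies: "d \<in> SD_rules A \<Longrightarrow> stationary d \<in> MD_policies A"
  unfolding SD_rules_def MD_policies_def stationary_def by auto

lemma stationary_shift: "(\<lambda>k. stationary d (Suc k)) = stationary d"
  and stationary_0: "stationary d 0 = d"
  unfolding stationary_def by simp_all

lemma mem_paths_iff:
  "\<omega> \<in> paths S s t \<longleftrightarrow>
     \<omega> 0 = s \<and> (\<forall>k\<in>{1..t}. \<omega> k \<in> states S) \<and> (\<forall>k>t. \<omega> k = undefined)"
  unfolding paths_def by (auto simp: PiE_iff extensional_def)

lemma finite_paths: "finite (paths S s t)"
  unfolding paths_def states_def by (rule finite_PiE) auto

lemma paths_0: "paths S s 0 = {\<lambda>k. if k = 0 then s else undefined}"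
  by (auto simp: mem_paths_iff)

lemma paths_in_states: "\<omega> \<in> paths S s t \<Longrightarrow> s \<in> states S \<Longrightarrow> k \<le> t \<Longrightarrow> \<omega> k \<in> states S"
  by (cases k) (auto simp: mem_paths_iff)

lemma case_nat_in_paths:
  assumes "s' \<in> states S" and "\<omega> \<in> paths S s' t"
  shows "case_nat s \<omega> \<in> paths S s (Suc t)"
  unfolding mem_paths_iff
proof (intro conjI ballI allI impI)
  fix k assume "k \<in> {1..Suc t}"
  then show "case_nat s \<omega> k \<in> states S"
    using paths_in_states[OF assms(2,1)] by (cases k) auto
next
  fix k assume "Suc t < k"
  then show "case_nat s \<omega> k = undefined"
    using assms(2) by (cases k) (auto simp: mem_paths_iff)
qed simp

lemma tail_in_paths:
  assumes "\<omega> \<in> paths S s (Suc t)"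
  shows "\<omega> 1 \<in> states S" and "\<omega> \<circ> Suc \<in> paths S (\<omega> 1) t"
  using assms by (auto simp: mem_paths_iff)

lemma bij_betw_case_nat_paths:
  "bij_betw (\<lambda>(s', \<omega>). case_nat s \<omega>) (SIGMA s':states S. paths S s' t) (paths S s (Suc t))"
proof (rule bij_betw_byWitness[where f' = "\<lambda>\<omega>. (\<omega> 1, \<omega> \<circ> Suc)"])
  show "\<forall>x\<in>(SIGMA s':states S. paths S s' t). (\<lambda>\<omega>. (\<omega> 1, \<omega> \<circ> Suc)) ((\<lambda>(s', \<omega>). case_nat s \<omega>) x) = x"
    by (auto simp: mem_paths_iff comp_def)
  show "\<forall>\<omega>\<in>paths S s (Suc t). (\<lambda>(s', \<omega>). case_nat s \<omega>) (\<omega> 1, \<omega> \<circ> Suc) = \<omega>"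
    by (auto simp: mem_paths_iff fun_eq_iff split: nat.split)
  show "(\<lambda>(s', \<omega>). case_nat s \<omega>) ` (SIGMA s':states S. paths S s' t) \<subseteq> paths S s (Suc t)"
    by (auto intro: case_nat_in_paths)
  show "(\<lambda>\<omega>. (\<omega> 1, \<omega> \<circ> Suc)) ` paths S s (Suc t) \<subseteq> (SIGMA s':states S. paths S s' t)"
    using tail_in_paths by blast
qed

lemma sum_paths_Suc:
  "(\<Sum>\<omega>\<in>paths S s (Suc t). g \<omega>) = (\<Sum>s'\<in>states S. \<Sum>\<omega>\<in>paths S s' t. g (case_nat s \<omega>))"
proof -
  have "(\<Sum>\<omega>\<in>paths S s (Suc t). g \<omega>)
        = (\<Sum>(s', \<omega>)\<in>(SIGMA s':states S. paths S s' t). g (case_nat s \<omega>))"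
    by (subst sum.reindex_bij_betw[OF bij_betw_case_nat_paths, symmetric])
      (simp add: case_prod_beta')
  also have "\<dots> = (\<Sum>s'\<in>states S. \<Sum>\<omega>\<in>paths S s' t. g (case_nat s \<omega>))"
    by (rule sum.Sigma[symmetric]) (auto simp: states_def finite_paths)
  finally show ?thesis .
qed

lemma path_prob_case_nat:
  "\<omega> \<in> paths S s' t \<Longrightarrow>
     path_prob p \<pi> (Suc t) (case_nat s \<omega>) = p s (\<pi> 0 s) s' * path_prob p (\<lambda>k. \<pi> (Suc k)) t \<omega>"
  unfolding path_prob_def prod.lessThan_Suc_shift by (simp add: mem_paths_iff)

lemma path_ret_case_nat:
  "\<omega> \<in> paths S s' t \<Longrightarrow>
     path_ret r \<pi> (Suc t) (case_nat s \<omega>) = r s (\<pi> 0 s) s' + path_ret r (\<lambda>k. \<pi> (Suc k)) t \<omega>"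
  unfolding path_ret_def sum.lessThan_Suc_shift by (simp add: mem_paths_iff)

definition exp_util ::
  "nat \<Rightarrow> (nat \<Rightarrow> nat \<Rightarrow> nat \<Rightarrow> real) \<Rightarrow> (nat \<Rightarrow> nat \<Rightarrow> nat \<Rightarrow> real) \<Rightarrow> real
     \<Rightarrow> (nat \<Rightarrow> nat \<Rightarrow> nat) \<Rightarrow> nat \<Rightarrow> nat \<Rightarrow> real" where
  "exp_util S p r \<beta> \<pi> t s =
     (\<Sum>\<omega>\<in>paths S s t. path_prob p \<pi> t \<omega> * exp (- \<beta> * path_ret r \<pi> t \<omega>))"

lemma v_fin_eq_exp_util: "v_fin S p r \<beta> \<pi> t s = - (1 / \<beta>) * ln (exp_util S p r \<beta> \<pi> t s)"
  unfolding v_fin_def ERM_def exp_util_def ..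

lemma exp_util_0: "exp_util S p r \<beta> \<pi> 0 s = 1"
  unfolding exp_util_def paths_0 path_prob_def path_ret_def by simp

lemma exp_util_Suc:
  "exp_util S p r \<beta> \<pi> (Suc t) s =
     (\<Sum>s'\<in>states S. p s (\<pi> 0 s) s' * exp (- \<beta> * r s (\<pi> 0 s) s') *
        exp_util S p r \<beta> (\<lambda>k. \<pi> (Suc k)) t s')"
proof -
  have "path_prob p \<pi> (Suc t) (case_nat s \<omega>) * exp (- \<beta> * path_ret r \<pi> (Suc t) (case_nat s \<omega>)) =
      p s (\<pi> 0 s) s' * exp (- \<beta> * r s (\<pi> 0 s) s') *
      (path_prob p (\<lambda>k. \<pi> (Suc k)) t \<omega> * exp (- \<beta> * path_ret r (\<lambda>k. \<pi> (Suc k)) t \<omega>))"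
    if "\<omega> \<in> paths S s' t" for s' \<omega>
    using that by (simp add: path_prob_case_nat path_ret_case_nat mult_exp_exp algebra_simps)
  then show ?thesis
    unfolding exp_util_def sum_paths_Suc by (simp add: sum_distrib_left)
qed

lemma state_prob_0: "state_prob S p \<pi> s 0 s' = (if s' = s then 1 else 0)"
proof -
  have "state_prob S p \<pi> s 0 s' = (\<Sum>\<omega>\<in>paths S s 0. if \<omega> 0 = s' then path_prob p \<pi> 0 \<omega> else 0)"
    unfolding state_prob_def by (simp add: sum.inter_filter finite_paths)
  then show ?thesis by (simp add: paths_0 path_prob_def)
qed

lemma state_prob_Suc:
  "state_prob S p \<pi> s (Suc t) s' =
     (\<Sum>s''\<in>states S. p s (\<pi> 0 s) s'' * state_prob S p (\<lambda>k. \<pi> (Suc k)) s'' t s')"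
proof -
  have "state_prob S p \<pi> s (Suc t) s' =
      (\<Sum>\<omega>\<in>paths S s (Suc t). if \<omega> (Suc t) = s' then path_prob p \<pi> (Suc t) \<omega> else 0)"
    unfolding state_prob_def by (simp add: sum.inter_filter finite_paths)
  also have "\<dots> = (\<Sum>s''\<in>states S. \<Sum>\<omega>\<in>paths S s'' t.
      p s (\<pi> 0 s) s'' * (if \<omega> t = s' then path_prob p (\<lambda>k. \<pi> (Suc k)) t \<omega> else 0))"
    unfolding sum_paths_Suc by (intro sum.cong refl) (simp add: path_prob_case_nat)
  also have "\<dots> = (\<Sum>s''\<in>states S. p s (\<pi> 0 s) s'' * state_prob S p (\<lambda>k. \<pi> (Suc k)) s'' t s')"
    unfolding state_prob_def by (simp add: sum_distrib_left sum.inter_filter finite_paths)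
  finally show ?thesis .
qed

section \<open>Finite-horizon optimality\<close>

locale sink_mdp =
  fixes S A :: nat and p r :: "nat \<Rightarrow> nat \<Rightarrow> nat \<Rightarrow> real" and \<beta> :: real
  assumes beta_pos: "0 < \<beta>" and actions_nonempty: "1 \<le> A"
    and p_nonneg: "\<And>s a s'. s \<in> states S \<Longrightarrow> a \<in> {1..A} \<Longrightarrow> s' \<in> states S \<Longrightarrow> 0 \<le> p s a s'"
    and p_sum: "\<And>s a. s \<in> states S \<Longrightarrow> a \<in> {1..A} \<Longrightarrow> (\<Sum>s'\<in>states S. p s a s') = 1"
    and sink_stays: "\<And>a. a \<in> {1..A} \<Longrightarrow> p (Suc S) a (Suc S) = 1"
    and sink_reward: "\<And>a. a \<in> {1..A} \<Longrightarrow> r (Suc S) a (Suc S) = 0"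

lemma sink_mdp_if_mdp: "0 < \<beta> \<Longrightarrow> mdp S A p r \<mu> \<Longrightarrow> sink_mdp S A p r \<beta>"
  by unfold_locales (auto simp: mdp_def)

context sink_mdp
begin

lemma sink_absorbing:
  assumes a: "a \<in> {1..A}" and s': "s' \<in> {1..S}"
  shows "p (Suc S) a s' = 0"
proof -
  have "1 + (\<Sum>s'\<in>{1..S}. p (Suc S) a s') = 1"
    using p_sum[OF sink_in_states a] sink_stays[OF a]
    unfolding states_eq_insert_sink by (simp add: sink_notin_nonsink)
  then have "(\<Sum>s'\<in>{1..S}. p (Suc S) a s') = 0" by simp
  moreover have "\<forall>x\<in>{1..S}. 0 \<le> p (Suc S) a x"
    using p_nonneg[OF sink_in_states a nonsink_in_states] by blast
  ultimately show ?thesis using s' by (metis finite_atLeastAtMost sum_nonneg_eq_0_iff)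
qed

lemma exp_weight_nonneg:
  "s \<in> states S \<Longrightarrow> a \<in> {1..A} \<Longrightarrow> s' \<in> states S \<Longrightarrow> 0 \<le> p s a s' * exp (- \<beta> * r s a s')"
  using p_nonneg by simp

text \<open>For any rule \<open>d\<close> with \<open>d s = a\<close>, \<open>qvalue a z s = - (L\<^sup>d (- z)) s\<close>: we work with the positive
  quantities \<open>- w\<close>, so that maximising \<open>w\<close> becomes minimising \<open>qvalue\<close>.\<close>

definition qvalue :: "nat \<Rightarrow> (nat \<Rightarrow> real) \<Rightarrow> nat \<Rightarrow> real" where
  "qvalue a z s =
     (\<Sum>s'\<in>{1..S}. p s a s' * exp (- \<beta> * r s a s') * z s')
       + p s a (Suc S) * exp (- \<beta> * r s a (Suc S))"

lemma qvalue_mono: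
  assumes "a \<in> {1..A}" "s \<in> {1..S}" "\<And>s'. s' \<in> {1..S} \<Longrightarrow> z s' \<le> z' s'"
  shows "qvalue a z s \<le> qvalue a z' s"
  unfolding qvalue_def
proof (intro add_right_mono sum_mono)
  fix s' assume s': "s' \<in> {1..S}"
  have "0 \<le> p s a s'"
    using p_nonneg[OF nonsink_in_states[OF assms(2)] assms(1) nonsink_in_states[OF s']] .
  then show "p s a s' * exp (- \<beta> * r s a s') * z s' \<le> p s a s' * exp (- \<beta> * r s a s') * z' s'"
    using assms(3)[OF s'] by (simp add: mult_left_mono)
qed

lemma qvalue_cong: "(\<And>s'. s' \<in> {1..S} \<Longrightarrow> z s' = z' s') \<Longrightarrow> qvalue a z s = qvalue a z' s"
  unfolding qvalue_def by simp

lemma qvalue_add_const: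
  "qvalue a (\<lambda>s'. z s' + c) s = qvalue a z s + c * (\<Sum>s'\<in>{1..S}. p s a s' * exp (- \<beta> * r s a s'))"
  unfolding qvalue_def by (simp add: algebra_simps sum.distrib sum_distrib_left)

lemma exp_util_sink: "\<pi> \<in> MD_policies A \<Longrightarrow> exp_util S p r \<beta> \<pi> t (Suc S) = 1"
proof (induction t arbitrary: \<pi>)
  case (Suc t)
  have a: "\<pi> 0 (Suc S) \<in> {1..A}" using MD_policies_action[OF Suc.prems] .
  show ?case
    unfolding exp_util_Suc states_eq_insert_sink
    using Suc.IH[OF MD_policies_shift[OF Suc.prems]]
    by (simp add: sink_notin_nonsink sink_stays[OF a] sink_reward[OF a] sink_absorbing[OF a])
qed (simp add: exp_util_0)

lemma exp_util_Suc_qvalue: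
  "\<pi> \<in> MD_policies A \<Longrightarrow>
     exp_util S p r \<beta> \<pi> (Suc t) s = qvalue (\<pi> 0 s) (exp_util S p r \<beta> (\<lambda>k. \<pi> (Suc k)) t) s"
  unfolding exp_util_Suc qvalue_def states_eq_insert_sink
  by (simp add: sink_notin_nonsink exp_util_sink MD_policies_shift add.commute)

lemma exp_util_pos: "\<pi> \<in> MD_policies A \<Longrightarrow> s \<in> states S \<Longrightarrow> 0 < exp_util S p r \<beta> \<pi> t s"
proof (induction t arbitrary: \<pi> s)
  case (Suc t)
  have a: "\<pi> 0 s \<in> {1..A}" using MD_policies_action[OF Suc.prems(1)] .
  obtain s' where s': "s' \<in> states S" "0 < p s (\<pi> 0 s) s'"
    using p_sum[OF Suc.prems(2) a] p_nonneg[OF Suc.prems(2) a]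
    by (metis not_le sum_nonpos zero_less_one)
  show ?case unfolding exp_util_Suc
  proof (rule sum_pos2[OF finite_states s'(1)])
    show "0 < p s (\<pi> 0 s) s' * exp (- \<beta> * r s (\<pi> 0 s) s') * exp_util S p r \<beta> (\<lambda>k. \<pi> (Suc k)) t s'"
      using s' Suc.IH[OF MD_policies_shift[OF Suc.prems(1)] s'(1)] by simp
  qed (use p_nonneg[OF Suc.prems(2) a] Suc.IH[OF MD_policies_shift[OF Suc.prems(1)]]
       in \<open>simp add: less_imp_le\<close>)
qed (simp add: exp_util_0)

lemma w_fin_eq_exp_util:
  "\<pi> \<in> MD_policies A \<Longrightarrow> s \<in> states S \<Longrightarrow> w_fin S p r \<beta> \<pi> t s = - exp_util S p r \<beta> \<pi> t s"
  using exp_util_pos[of \<pi> s t] beta_pos unfolding w_fin_def v_fin_eq_exp_util by simp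

definition bellman_opt :: "(nat \<Rightarrow> real) \<Rightarrow> nat \<Rightarrow> real" where
  "bellman_opt z s = Min ((\<lambda>a. qvalue a z s) ` {1..A})"

lemma bellman_opt_le: "a \<in> {1..A} \<Longrightarrow> bellman_opt z s \<le> qvalue a z s"
  unfolding bellman_opt_def by (intro Min_le) auto

lemma greedy_rule_exists:
  obtains d where "d \<in> SD_rules A" and "\<And>s. qvalue (d s) z s = bellman_opt z s"
proof -
  have "\<exists>a\<in>{1..A}. qvalue a z s = bellman_opt z s" for s
  proof -
    have "bellman_opt z s \<in> (\<lambda>a. qvalue a z s) ` {1..A}"
      unfolding bellman_opt_def using actions_nonempty by (intro Min_in) auto
    then show ?thesis by force
  qed
  then obtain d where "\<And>s. d s \<in> {1..A} \<and> qvalue (d s) z s = bellman_opt z s"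
    by metis
  then show ?thesis using that unfolding SD_rules_def by blast
qed

primrec opt_exp_util :: "nat \<Rightarrow> nat \<Rightarrow> real" where
  "opt_exp_util 0 = (\<lambda>s. 1)"
| "opt_exp_util (Suc t) = bellman_opt (opt_exp_util t)"

lemma opt_exp_util_le:
  "\<pi> \<in> MD_policies A \<Longrightarrow> s \<in> {1..S} \<Longrightarrow> opt_exp_util t s \<le> exp_util S p r \<beta> \<pi> t s"
proof (induction t arbitrary: \<pi> s)
  case (Suc t)
  have a: "\<pi> 0 s \<in> {1..A}" using MD_policies_action[OF Suc.prems(1)] .
  have "opt_exp_util (Suc t) s \<le> qvalue (\<pi> 0 s) (opt_exp_util t) s"
    using bellman_opt_le[OF a] by simp
  also have "\<dots> \<le> qvalue (\<pi> 0 s) (exp_util S p r \<beta> (\<lambda>k. \<pi> (Suc k)) t) s"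
    using qvalue_mono[OF a Suc.prems(2)] Suc.IH[OF MD_policies_shift[OF Suc.prems(1)]] by blast
  also have "\<dots> = exp_util S p r \<beta> \<pi> (Suc t) s"
    using exp_util_Suc_qvalue[OF Suc.prems(1)] by simp
  finally show ?case .
qed (simp add: exp_util_0)

lemma opt_exp_util_attained:
  "\<exists>\<pi>\<in>MD_policies A. \<forall>s\<in>{1..S}. exp_util S p r \<beta> \<pi> t s = opt_exp_util t s"
proof (induction t)
  case 0
  have "(\<lambda>k s. 1) \<in> MD_policies A" using actions_nonempty unfolding MD_policies_def by auto
  then show ?case by (auto simp: exp_util_0)
next
  case (Suc t)
  then obtain \<pi> where \<pi>: "\<pi> \<in> MD_policies A" "\<forall>s\<in>{1..S}. exp_util S p r \<beta> \<pi> t s = opt_exp_util t s"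
    by blast
  obtain d where d: "d \<in> SD_rules A"
      "\<And>s. qvalue (d s) (opt_exp_util t) s = bellman_opt (opt_exp_util t) s"
    using greedy_rule_exists[of "opt_exp_util t"] by blast
  have \<pi>': "case_nat d \<pi> \<in> MD_policies A"
    using \<pi>(1) d(1) unfolding MD_policies_def SD_rules_def by (auto split: nat.split)
  have "exp_util S p r \<beta> (case_nat d \<pi>) (Suc t) s = opt_exp_util (Suc t) s" if s: "s \<in> {1..S}" for s
  proof -
    have "exp_util S p r \<beta> (case_nat d \<pi>) (Suc t) s = qvalue (d s) (exp_util S p r \<beta> \<pi> t) s"
      using exp_util_Suc_qvalue[OF \<pi>'] by simp
    also have "\<dots> = qvalue (d s) (opt_exp_util t) s" using \<pi>(2) by (intro qvalue_cong) auto
    finally show ?thesis using d(2) by simp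
  qed
  then show ?case using \<pi>' by blast
qed

lemma opt_exp_util_pos: "s \<in> {1..S} \<Longrightarrow> 0 < opt_exp_util t s"
  using opt_exp_util_attained[of t] exp_util_pos nonsink_in_states by metis

lemma w_opt_eq_opt_exp_util:
  assumes s: "s \<in> {1..S}"
  shows "w_opt S A p r \<beta> t s = - opt_exp_util t s"
proof -
  obtain \<pi>\<^sub>0 where \<pi>\<^sub>0: "\<pi>\<^sub>0 \<in> MD_policies A" "exp_util S p r \<beta> \<pi>\<^sub>0 t s = opt_exp_util t s"
    using opt_exp_util_attained s by blast
  have "v_fin S p r \<beta> \<pi> t s \<le> v_fin S p r \<beta> \<pi>\<^sub>0 t s" if "\<pi> \<in> MD_policies A" for \<pi>
    using opt_exp_util_le[OF that s] \<pi>\<^sub>0(2) beta_pos opt_exp_util_pos[OF s]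
      exp_util_pos[OF that nonsink_in_states[OF s]]
    unfolding v_fin_eq_exp_util by (simp add: divide_right_mono)
  then have "v_opt S A p r \<beta> t s = v_fin S p r \<beta> \<pi>\<^sub>0 t s"
    unfolding v_opt_def using \<pi>\<^sub>0(1) by (intro cSup_eq_maximum) auto
  then show ?thesis
    using w_fin_eq_exp_util[OF \<pi>\<^sub>0(1) nonsink_in_states[OF s]] \<pi>\<^sub>0(2)
    unfolding w_opt_def w_fin_def by simp
qed

end

section \<open>Evaluating a stationary deterministic rule\<close>

lemma sum_det_rule:
  assumes "d s \<in> {1..A}"
  shows "(\<Sum>a\<in>{1..A}. f a * det_rule d s a * g a) = f (d s) * g (d s)"
proof -
  have "(\<Sum>a\<in>{1..A}. f a * det_rule d s a * g a) = (\<Sum>a\<in>{1..A}. if a = d s then f a * g a else 0)"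
    unfolding det_rule_def by (intro sum.cong) auto
  then show ?thesis using assms by simp
qed

lemma Bmat_det_rule:
  "d s \<in> {1..A} \<Longrightarrow> Bmat S A p r \<beta> (det_rule d) s s' = p s (d s) s' * exp (- \<beta> * r s (d s) s')"
  unfolding Bmat_def by (rule sum_det_rule)

lemma bvec_det_rule:
  "d s \<in> {1..A} \<Longrightarrow> bvec S A p r \<beta> (det_rule d) s = p s (d s) (Suc S) * exp (- \<beta> * r s (d s) (Suc S))"
  unfolding bvec_def by (rule sum_det_rule)

locale sink_mdp_rule = sink_mdp +
  fixes d :: "nat \<Rightarrow> nat"
  assumes rule_SD: "d \<in> SD_rules A"

sublocale sink_mdp_rule \<subseteq>
  nonneg_affine "{1..S}" "Bmat S A p r \<beta> (det_rule d)" "bvec S A p r \<beta> (det_rule d)"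
proof
  have action: "d s \<in> {1..A}" for s using SD_rules_action[OF rule_SD] .
  show "0 \<le> Bmat S A p r \<beta> (det_rule d) s s'" if "s \<in> {1..S}" "s' \<in> {1..S}" for s s'
    using p_nonneg[OF nonsink_in_states[OF that(1)] action nonsink_in_states[OF that(2)]]
    by (simp add: Bmat_det_rule[where d = d, OF action])
  show "0 \<le> bvec S A p r \<beta> (det_rule d) s" if "s \<in> {1..S}" for s
    using p_nonneg[OF nonsink_in_states[OF that] action sink_in_states]
    by (simp add: bvec_det_rule[where d = d, OF action])
qed simp

context sink_mdp_rule
begin

lemma aff_eq_qvalue: "aff z s = qvalue (d s) z s"
  using SD_rules_action[OF rule_SD]
  unfolding aff_def lin_def qvalue_def by (simp add: Bmat_det_rule bvec_det_rule)

lemma L_op_eq_aff: "L_op S A p r \<beta> (det_rule d) w s = - aff (\<lambda>s'. - w s') s"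
  unfolding L_op_def aff_def lin_def by (simp add: sum_negf)

lemma L_op_fixed:
  assumes "\<And>s. s \<in> {1..S} \<Longrightarrow> aff u s = u s" and "\<And>s. s \<in> {1..S} \<Longrightarrow> w s = - u s"
    and "s \<in> {1..S}"
  shows "L_op S A p r \<beta> (det_rule d) w s = w s"
proof -
  have "aff (\<lambda>s'. - w s') s = aff u s" using assms(2) by (intro aff_cong) simp
  then show ?thesis using assms by (simp add: L_op_eq_aff)
qed

lemma exp_util_stationary: "exp_util S p r \<beta> (stationary d) t s = (aff ^^ t) (\<lambda>_. 1) s"
proof (induction t arbitrary: s)
  case (Suc t)
  have "exp_util S p r \<beta> (stationary d) (Suc t) s
        = qvalue (d s) (exp_util S p r \<beta> (stationary d) t) s"
    using exp_util_Suc_qvalue[OF stationary_in_MD_policies[OF rule_SD]]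
    by (simp add: stationary_shift stationary_0)
  also have "\<dots> = aff (exp_util S p r \<beta> (stationary d) t) s"
    by (rule aff_eq_qvalue[symmetric])
  also have "\<dots> = aff ((aff ^^ t) (\<lambda>_. 1)) s"
    by (rule aff_cong) (rule Suc.IH)
  finally show ?case by simp
qed (simp add: exp_util_0)

text \<open>Otherwise the states that never reach the sink form a closed class: the chain started
  there stays there, so its occupation probabilities sum to \<open>1\<close> at every time, which
  contradicts transience.\<close>

lemma transient_reachable:
  assumes transient: "transient S A p" and s\<^sub>0: "s\<^sub>0 \<in> {1..S}"
  shows "\<exists>n. 0 < (aff ^^ n) (\<lambda>_. 0) s\<^sub>0"
proof (rule ccontr)
  define R where "R = {s \<in> {1..S}. \<forall>n. (aff ^^ n) (\<lambda>_. 0) s = 0}"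
  assume "\<not> ?thesis"
  then have s\<^sub>0_R: "s\<^sub>0 \<in> R"
    unfolding R_def using s\<^sub>0 aff_pow_zero_nonneg[OF s\<^sub>0] by (auto intro: antisym simp: not_less)
  have action: "d s \<in> {1..A}" for s using SD_rules_action[OF rule_SD] .
  have no_exit: "p s (d s) s' = 0" if s: "s \<in> R" and s': "s' \<in> states S" "s' \<notin> R" for s s'
  proof (cases "s' = Suc S")
    case True
    then show ?thesis
      using unreached_no_exit[of s] s by (simp add: R_def bvec_det_rule[where d = d, OF action])
  next
    case False
    then have "s' \<in> {1..S}" using s' unfolding states_def by auto
    then have "Bmat S A p r \<beta> (det_rule d) s s' = 0"
      using unreached_closed[of s s'] s s'(2) unfolding R_def by blast
    then show ?thesis by (simp add: Bmat_det_rule[where d = d, OF action])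
  qed
  have stays: "(\<Sum>s'\<in>R. state_prob S p (stationary d) s t s') = 1" if "s \<in> R" for s t
    using that
  proof (induction t arbitrary: s)
    case 0
    then show ?case by (simp add: state_prob_0 R_def)
  next
    case (Suc t)
    have s: "s \<in> states S" using Suc.prems unfolding R_def by (auto intro: nonsink_in_states)
    have "(\<Sum>s'\<in>R. state_prob S p (stationary d) s (Suc t) s')
        = (\<Sum>s''\<in>states S. p s (d s) s'' * (\<Sum>s'\<in>R. state_prob S p (stationary d) s'' t s'))"
      by (simp add: state_prob_Suc stationary_shift stationary_0 sum.swap[of _ R] sum_distrib_left)
    also have "\<dots> = (\<Sum>s''\<in>states S. p s (d s) s'')"
      using Suc.IH no_exit[OF Suc.prems] by (intro sum.cong) auto
    also have "\<dots> = 1" using p_sum[OF s action] .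
    finally show ?case .
  qed
  have "summable (\<lambda>t. \<Sum>s'\<in>R. state_prob S p (stationary d) s\<^sub>0 t s')"
    using transient rule_SD s\<^sub>0 unfolding transient_def R_def by (intro summable_sum) blast
  then show False using stays[OF s\<^sub>0_R] by (simp add: summable_const_iff)
qed

context
  fixes u :: "nat \<Rightarrow> real"
  assumes transient: "transient S A p"
    and u_nonneg: "\<And>s. s \<in> {1..S} \<Longrightarrow> 0 \<le> u s"
    and u_fixed: "\<And>s. s \<in> {1..S} \<Longrightarrow> aff u s = u s"
begin

lemma w_inf_stationary_eq:
  assumes s: "s \<in> {1..S}"
  shows "w_inf S p r \<beta> (stationary d) s = ereal (- u s)"
proof -
  have "(\<lambda>t. (aff ^^ t) (\<lambda>_. 1) s) \<longlonglongrightarrow> u s"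
    by (rule aff_pow_tendsto_fixed[OF u_nonneg u_fixed[THEN eq_refl]
      transient_reachable[OF transient] u_fixed s])
  then have "(\<lambda>t. ereal (- (aff ^^ t) (\<lambda>_. 1) s)) \<longlonglongrightarrow> ereal (- u s)"
    by (intro tendsto_ereal tendsto_minus)
  moreover have "w_fin S p r \<beta> (stationary d) t s = - (aff ^^ t) (\<lambda>_. 1) s" for t
    unfolding exp_util_stationary[symmetric]
    by (rule w_fin_eq_exp_util[OF stationary_in_MD_policies[OF rule_SD] nonsink_in_states[OF s]])
  ultimately show ?thesis
    unfolding w_inf_def by (simp add: lim_imp_Liminf)
qed

lemma L_op_fixed_unique:
  assumes w: "\<forall>s\<in>{1..S}. w s = L_op S A p r \<beta> (det_rule d) w s" and s: "s \<in> {1..S}"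
  shows "w s = - u s"
proof -
  have "aff (\<lambda>s. - w s) s = - w s" if "s \<in> {1..S}" for s
    using w that by (simp add: L_op_eq_aff)
  then show ?thesis
    using fixed_point_unique[OF u_nonneg u_fixed[THEN eq_refl]
      transient_reachable[OF transient] u_fixed _ s] by force
qed

end

end

section \<open>The infinite horizon\<close>

lemma le_of_forall_pos_le_add_mult:
  fixes x y C :: real
  assumes "0 \<le> C" and "\<And>\<epsilon>. 0 < \<epsilon> \<Longrightarrow> x \<le> y + \<epsilon> * C"
  shows "x \<le> y"
proof (rule field_le_epsilon)
  fix e :: real assume "0 < e"
  then have "x \<le> y + e / (C + 1) * C"
    using assms(1) assms(2)[of "e / (C + 1)"] by (simp add: add_nonneg_pos)
  also have "\<dots> \<le> y + e" using \<open>0 < e\<close> \<open>0 \<le> C\<close> by (simp add: field_simps)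
  finally show "x \<le> y + e" .
qed

context sink_mdp
begin

definition opt_limsup :: "nat \<Rightarrow> real" where
  "opt_limsup s = real_of_ereal (limsup (\<lambda>t. ereal (opt_exp_util t s)))"

definition opt_liminf :: "nat \<Rightarrow> real" where
  "opt_liminf s = real_of_ereal (liminf (\<lambda>t. ereal (opt_exp_util t s)))"

lemma w_inf_opt_eq_limsup:
  "s \<in> {1..S} \<Longrightarrow> w_inf_opt S A p r \<beta> s = - limsup (\<lambda>t. ereal (opt_exp_util t s))"
  unfolding w_inf_opt_def using w_opt_eq_opt_exp_util
  by (simp add: ereal_Liminf_uminus[symmetric])

context
  assumes finite_opt: "\<forall>s\<in>{1..S}. w_inf_opt S A p r \<beta> s \<noteq> -\<infinity>"
begin

lemma
  assumes s: "s \<in> {1..S}"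
  shows limsup_opt_exp_util: "limsup (\<lambda>t. ereal (opt_exp_util t s)) = ereal (opt_limsup s)"
    and liminf_opt_exp_util: "liminf (\<lambda>t. ereal (opt_exp_util t s)) = ereal (opt_liminf s)"
    and opt_liminf_nonneg: "0 \<le> opt_liminf s"
    and opt_liminf_le_limsup: "opt_liminf s \<le> opt_limsup s"
    and opt_limsup_nonneg: "0 \<le> opt_limsup s"
    and w_inf_opt_eq: "w_inf_opt S A p r \<beta> s = ereal (- opt_limsup s)"
proof -
  have "0 \<le> liminf (\<lambda>t. ereal (opt_exp_util t s))"
    using opt_exp_util_pos[OF s] by (intro Liminf_bounded always_eventually) (simp add: less_imp_le)
  moreover have "liminf (\<lambda>t. ereal (opt_exp_util t s)) \<le> limsup (\<lambda>t. ereal (opt_exp_util t s))"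
    by (rule Liminf_le_Limsup) simp
  moreover have "limsup (\<lambda>t. ereal (opt_exp_util t s)) \<noteq> \<infinity>"
    using finite_opt s w_inf_opt_eq_limsup[OF s] by auto
  ultimately show limsup: "limsup (\<lambda>t. ereal (opt_exp_util t s)) = ereal (opt_limsup s)"
    and liminf: "liminf (\<lambda>t. ereal (opt_exp_util t s)) = ereal (opt_liminf s)"
    and "0 \<le> opt_liminf s" and "opt_liminf s \<le> opt_limsup s" and "0 \<le> opt_limsup s"
    unfolding opt_limsup_def opt_liminf_def
    by (cases "liminf (\<lambda>t. ereal (opt_exp_util t s))";
        cases "limsup (\<lambda>t. ereal (opt_exp_util t s))"; simp)+
  show "w_inf_opt S A p r \<beta> s = ereal (- opt_limsup s)"
    using w_inf_opt_eq_limsup[OF s] limsup by simp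
qed

lemma eventually_opt_exp_util_less:
  assumes "0 < \<epsilon>"
  shows "\<forall>\<^sub>F t in sequentially. \<forall>s\<in>{1..S}. opt_exp_util t s < opt_limsup s + \<epsilon>"
proof (intro eventually_ball_finite ballI)
  fix s assume "s \<in> {1..S}"
  then have "limsup (\<lambda>t. ereal (opt_exp_util t s)) < ereal (opt_limsup s + \<epsilon>)"
    using assms by (simp add: limsup_opt_exp_util)
  then show "\<forall>\<^sub>F t in sequentially. opt_exp_util t s < opt_limsup s + \<epsilon>"
    by (auto dest: Limsup_lessD)
qed simp

lemma eventually_opt_exp_util_greater:
  assumes "0 < \<epsilon>"
  shows "\<forall>\<^sub>F t in sequentially. \<forall>s\<in>{1..S}. opt_liminf s - \<epsilon> < opt_exp_util t s"
proof (intro eventually_ball_finite ballI)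
  fix s assume "s \<in> {1..S}"
  then have "ereal (opt_liminf s - \<epsilon>) < liminf (\<lambda>t. ereal (opt_exp_util t s))"
    using assms by (simp add: liminf_opt_exp_util)
  then show "\<forall>\<^sub>F t in sequentially. opt_liminf s - \<epsilon> < opt_exp_util t s"
    by (auto dest: less_LiminfD)
qed simp

lemma opt_limsup_le_qvalue:
  assumes a: "a \<in> {1..A}" and s: "s \<in> {1..S}"
  shows "opt_limsup s \<le> qvalue a opt_limsup s"
proof -
  define C where "C = (\<Sum>s'\<in>{1..S}. p s a s' * exp (- \<beta> * r s a s'))"
  have "0 \<le> C"
    unfolding C_def by (meson sum_nonneg exp_weight_nonneg nonsink_in_states s a)
  moreover have "opt_limsup s \<le> qvalue a opt_limsup s + \<epsilon> * C" if "0 < \<epsilon>" for \<epsilon>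
  proof -
    have "\<forall>\<^sub>F t in sequentially. ereal (opt_exp_util (Suc t) s)
        \<le> ereal (qvalue a opt_limsup s + \<epsilon> * C)"
      using eventually_opt_exp_util_less[OF that]
    proof eventually_elim
      case (elim t)
      have "opt_exp_util (Suc t) s \<le> qvalue a (opt_exp_util t) s"
        using bellman_opt_le[OF a] by simp
      also have "\<dots> \<le> qvalue a (\<lambda>s'. opt_limsup s' + \<epsilon>) s"
        using elim by (intro qvalue_mono[OF a s]) (simp add: less_imp_le)
      finally show ?case by (simp add: qvalue_add_const C_def)
    qed
    then have "limsup (\<lambda>t. ereal (opt_exp_util (Suc t) s)) \<le> ereal (qvalue a opt_limsup s + \<epsilon> * C)"
      by (rule Limsup_bounded)
    then show ?thesis
      using limsup_shift[of "\<lambda>t. ereal (opt_exp_util t s)"] by (simp add: limsup_opt_exp_util[OF s])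
  qed
  ultimately show ?thesis by (rule le_of_forall_pos_le_add_mult)
qed

lemma bellman_opt_liminf_le:
  assumes s: "s \<in> {1..S}"
  shows "bellman_opt opt_liminf s \<le> opt_liminf s"
proof -
  define C where "C = (\<Sum>a\<in>{1..A}. \<Sum>s'\<in>{1..S}. p s a s' * exp (- \<beta> * r s a s'))"
  have weight_nonneg: "0 \<le> (\<Sum>s'\<in>{1..S}. p s a s' * exp (- \<beta> * r s a s'))" if "a \<in> {1..A}" for a
    by (blast intro: sum_nonneg exp_weight_nonneg nonsink_in_states s that)
  have weight_le: "(\<Sum>s'\<in>{1..S}. p s a s' * exp (- \<beta> * r s a s')) \<le> C" if "a \<in> {1..A}" for a
    unfolding C_def by (rule member_le_sum[OF that]) (blast intro: weight_nonneg, simp)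
  have "0 \<le> C"
    unfolding C_def by (blast intro: sum_nonneg weight_nonneg)
  moreover have "bellman_opt opt_liminf s \<le> opt_liminf s + \<epsilon> * C" if "0 < \<epsilon>" for \<epsilon>
  proof -
    have "\<forall>\<^sub>F t in sequentially. ereal (bellman_opt opt_liminf s - \<epsilon> * C)
        \<le> ereal (opt_exp_util (Suc t) s)"
      using eventually_opt_exp_util_greater[OF that]
    proof eventually_elim
      case (elim t)
      have "bellman_opt opt_liminf s - \<epsilon> * C \<le> qvalue a (opt_exp_util t) s" if a: "a \<in> {1..A}" for a
      proof -
        have "\<epsilon> * (\<Sum>s'\<in>{1..S}. p s a s' * exp (- \<beta> * r s a s')) \<le> \<epsilon> * C"
          using weight_le[OF a] \<open>0 < \<epsilon>\<close> by (simp add: mult_left_mono)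
        then have "bellman_opt opt_liminf s - \<epsilon> * C \<le> qvalue a (\<lambda>s'. opt_liminf s' + - \<epsilon>) s"
          using bellman_opt_le[OF a, of opt_liminf s] unfolding qvalue_add_const by linarith
        also have "\<dots> \<le> qvalue a (opt_exp_util t) s"
          using elim by (intro qvalue_mono[OF a s]) (simp add: less_imp_le)
        finally show ?thesis .
      qed
      then show ?case
        using actions_nonempty by (simp add: bellman_opt_def)
    qed
    then have "ereal (bellman_opt opt_liminf s - \<epsilon> * C)
      \<le> liminf (\<lambda>t. ereal (opt_exp_util (Suc t) s))"
      by (rule Liminf_bounded)
    then show ?thesis
      using liminf_shift[of "\<lambda>t. ereal (opt_exp_util t s)"] by (simp add: liminf_opt_exp_util[OF s])
  qed
  ultimately show ?thesis by (rule le_of_forall_pos_le_add_mult)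
qed

lemma opt_limsup_fixed_by_greedy_rule:
  assumes transient: "transient S A p"
  obtains d where "d \<in> SD_rules A" and "\<And>s. s \<in> {1..S} \<Longrightarrow> qvalue (d s) opt_limsup s = opt_limsup s"
proof -
  obtain d where d: "d \<in> SD_rules A" "\<And>s. qvalue (d s) opt_liminf s = bellman_opt opt_liminf s"
    using greedy_rule_exists by blast
  interpret D: sink_mdp_rule S A p r \<beta> d
    by (intro sink_mdp_rule.intro sink_mdp_axioms sink_mdp_rule_axioms.intro d(1))
  have super: "D.aff opt_liminf s \<le> opt_liminf s" if "s \<in> {1..S}" for s
    using bellman_opt_liminf_le[OF that] unfolding D.aff_eq_qvalue d(2) .
  have sub: "opt_limsup s \<le> D.aff opt_limsup s" if "s \<in> {1..S}" for s
    using opt_limsup_le_qvalue[OF SD_rules_action[OF d(1)] that] unfolding D.aff_eq_qvalue .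
  have eq: "opt_limsup s = opt_liminf s" if "s \<in> {1..S}" for s
    using D.sub_le_super[OF opt_liminf_nonneg super D.transient_reachable[OF transient] sub that]
      opt_liminf_le_limsup[OF that] by simp
  have "qvalue (d s) opt_limsup s = opt_limsup s" if s: "s \<in> {1..S}" for s
  proof (rule antisym)
    have "qvalue (d s) opt_limsup s = qvalue (d s) opt_liminf s" using eq by (rule qvalue_cong)
    also have "\<dots> \<le> opt_liminf s" using super[OF s] unfolding D.aff_eq_qvalue .
    finally show "qvalue (d s) opt_limsup s \<le> opt_limsup s" using eq[OF s] by simp
    show "opt_limsup s \<le> qvalue (d s) opt_limsup s" using sub[OF s] unfolding D.aff_eq_qvalue .
  qed
  then show ?thesis using that d(1) by blast
qed

end

end

theorem theorem2:
  fixes S A :: nat and p r :: "nat \<Rightarrow> nat \<Rightarrow> nat \<Rightarrow> real" and \<mu> :: "nat \<Rightarrow> real" and \<beta> :: real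
  assumes "0 < \<beta>"
    and "mdp S A p r \<mu>"
    and "transient S A p"
    and "\<forall>s\<in>{1..S}. w_inf_opt S A p r \<beta> s \<noteq> -\<infinity>"
  shows "\<exists>d\<in>SD_rules A.
           (\<forall>s\<in>{1..S}.
              w_inf_opt S A p r \<beta> s = w_inf S p r \<beta> (stationary d) s \<and>
              w_inf_opt S A p r \<beta> s =
                ereal (L_op S A p r \<beta> (det_rule d) (\<lambda>s'. real_of_ereal (w_inf_opt S A p r \<beta> s')) s)) \<and>
           (\<forall>w :: nat \<Rightarrow> real. (\<forall>s\<in>{1..S}. w s = L_op S A p r \<beta> (det_rule d) w s) \<longrightarrow>
              (\<forall>s\<in>{1..S}. ereal (w s) = w_inf_opt S A p r \<beta> s))"
proof -
  interpret sink_mdp S A p r \<beta> using assms(1,2) by (rule sink_mdp_if_mdp)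
  obtain d where d: "d \<in> SD_rules A"
    and fixed: "\<And>s. s \<in> {1..S} \<Longrightarrow> qvalue (d s) opt_limsup s = opt_limsup s"
    using opt_limsup_fixed_by_greedy_rule[OF assms(4,3)] by blast
  interpret D: sink_mdp_rule S A p r \<beta> d
    by (intro sink_mdp_rule.intro sink_mdp_axioms sink_mdp_rule_axioms.intro d)
  have U_fixed: "\<And>s. s \<in> {1..S} \<Longrightarrow> D.aff opt_limsup s = opt_limsup s"
    unfolding D.aff_eq_qvalue by (rule fixed)
  note U_nonneg = opt_limsup_nonneg[OF assms(4)] and w_inf_opt = w_inf_opt_eq[OF assms(4)]
  have w_inf_opt_real: "\<And>s. s \<in> {1..S} \<Longrightarrow> real_of_ereal (w_inf_opt S A p r \<beta> s) = - opt_limsup s"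
    using w_inf_opt by simp
  show ?thesis
  proof (intro bexI[OF _ d] conjI ballI allI impI)
    fix s assume s: "s \<in> {1..S}"
    show "w_inf_opt S A p r \<beta> s = w_inf S p r \<beta> (stationary d) s"
      using D.w_inf_stationary_eq[OF assms(3) U_nonneg U_fixed s] w_inf_opt[OF s] by simp
    have "L_op S A p r \<beta> (det_rule d) (\<lambda>s'. real_of_ereal (w_inf_opt S A p r \<beta> s')) s
        = real_of_ereal (w_inf_opt S A p r \<beta> s)"
      by (rule D.L_op_fixed[OF U_fixed w_inf_opt_real s])
    then show "w_inf_opt S A p r \<beta> s =
        ereal (L_op S A p r \<beta> (det_rule d) (\<lambda>s'. real_of_ereal (w_inf_opt S A p r \<beta> s')) s)"
      using w_inf_opt[OF s] by simp
  next
    fix w s assume w: "\<forall>s\<in>{1..S}. w s = L_op S A p r \<beta> (det_rule d) w s" and s: "s \<in> {1..S}"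
    show "ereal (w s) = w_inf_opt S A p r \<beta> s"
      using D.L_op_fixed_unique[OF assms(3) U_nonneg U_fixed w s] w_inf_opt[OF s] by simp
  qed
qed

end
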